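(* For integers $1\le k\le l$, the element $g_{l,k-1}$ divides $\{k-1\}_q!$, and there is an equality of ideals of $\mathbb{Z}[q,q^{-1}]$ $$\Big(\{l-k+1\}_q,\ \{k\}_q\,\frac{\{k-1\}_q!}{g_{l,k-1}}\Big)=\big(\tilde g_{l,k}\big),\qquad\text{where } \tilde g_{l,k}=\prod_{\substack{m\mid l-k+1\\ 1\le m\le k}}\Phi_m .$$
   Context: In $\mathbb{Z}[q,q^{-1}]$ set $\{i\}_q=q^i-1$, $\{i\}_{q,n}=\{i\}_q\cdots\{i-n+1\}_q$ (equal to $1$ for $n=0$), $\{n\}_q!=\{n\}_{q,n}$. For $0\le i\le k\le l$ set $h_{l,k,i}=\{l-i\}_{q,k-i}\{i\}_q!$ and $g_{l,k}=\mathrm{GCD}(h_{l,k,0},\dots,h_{l,k,k})$ (greatest common divisor in the UFD $\mathbb{Z}[q,q^{-1}]$, defined up to units $\pm q^j$). $(a,b)$ denotes the ideal generated by $a,b$. $\Phi_m$ is the $m$th cyclotomic polynomial. *)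

theory Defs
  imports Complex_Main "HOL-Computational_Algebra.Computational_Algebra"
begin

text \<open>Elements of Z[q,q^-1] occurring here are all polynomials; we represent them
 as integer polynomials in q. Laurent-ring notions are expressed via multiplication
 by powers of q (the units q^N).\<close>

definition qb :: "nat \<Rightarrow> int poly" where
  "qb i = monom 1 i - 1"

definition qfall :: "nat \<Rightarrow> nat \<Rightarrow> int poly" where
  "qfall i n = (\<Prod>j<n. qb (i - j))"

definition qfact :: "nat \<Rightarrow> int poly" where
  "qfact n = qfall n n"

definition hlki :: "nat \<Rightarrow> nat \<Rightarrow> nat \<Rightarrow> int poly" where
  "hlki l k i = qfall (l - i) (k - i) * qfact i"

definition glk :: "nat \<Rightarrow> nat \<Rightarrow> int poly" where
  "glk l k = Gcd (hlki l k ` {0..k})"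

definition cyclotomic :: "nat \<Rightarrow> int poly" where
  "cyclotomic m = (THE p. map_poly of_int p =
     (\<Prod>j\<in>{j. j < m \<and> coprime j m}. [:- cis (2 * pi * real j / real m), 1:]))"

definition gtilde :: "nat \<Rightarrow> nat \<Rightarrow> int poly" where
  "gtilde l k = (\<Prod>m\<in>{m. m dvd (l - k + 1) \<and> 1 \<le> m \<and> m \<le> k}. cyclotomic m)"

definition laurent_dvd :: "int poly \<Rightarrow> int poly \<Rightarrow> bool" where
  "laurent_dvd a b \<longleftrightarrow> (\<exists>N. a dvd monom 1 N * b)"

text \<open>Equality of ideals (a,b) = (c) in Z[q,q^-1]; tested on polynomial elements,
 which suffices since every Laurent polynomial is a unit times a polynomial.\<close>
definition laurent_ideal2_eq :: "int poly \<Rightarrow> int poly \<Rightarrow> int poly \<Rightarrow> bool" where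
  "laurent_ideal2_eq a b c \<longleftrightarrow>
     (\<forall>x. (\<exists>N u v. monom 1 N * x = u * a + v * b) \<longleftrightarrow> laurent_dvd c x)"

end

theory Submission
  imports Defs "HOL-Analysis.Analysis"
begin

(* All polynomials in the statement are products of cyclotomic polynomials in
   Z[q]:  {j}_q = q^j - 1 = prod_{d | j} Phi_d, so h_{l,k-1,i}, {k-1}_q!, {k}_q, {l-k+1}_q and
   gtilde_{l,k} all have the form  cyc_prod L e = prod_{d=1..L} Phi_d^(e d)  with explicit
   exponents e (numbers of multiples of d in intervals). *)

section \<open>Integer polynomials viewed as complex polynomials\<close>

text \<open>Facts about integer polynomials are deduced from their complex roots via the
  coefficient embedding \<open>\<int>[q] \<rightarrow> \<complex>[q]\<close>, a ring homomorphism.\<close>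

abbreviation cpoly :: "int poly \<Rightarrow> complex poly" where
  "cpoly \<equiv> map_poly of_int"

lemma cpoly_mult: "cpoly (p * q) = cpoly p * cpoly q"
  by (intro poly_eqI) (simp add: coeff_map_poly coeff_mult of_int_sum)

lemma cpoly_add: "cpoly (p + q) = cpoly p + cpoly q"
  by (intro poly_eqI) (simp add: coeff_map_poly)

lemma cpoly_diff: "cpoly (p - q) = cpoly p - cpoly q"
  by (intro poly_eqI) (simp add: coeff_map_poly)

lemma cpoly_prod: "cpoly (\<Prod>x\<in>A. f x) = (\<Prod>x\<in>A. cpoly (f x))"
  by (induction A rule: infinite_finite_induct) (auto simp: cpoly_mult)

lemma cpoly_qb: "cpoly (qb n) = monom 1 n - 1"
  by (simp add: qb_def cpoly_diff map_poly_monom)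

lemma cpoly_inj: "cpoly p = cpoly q \<Longrightarrow> p = q"
  by (intro poly_eqI) (metis coeff_map_poly of_int_0 of_int_eq_iff)

lemma cpoly_dvd: "p dvd q \<Longrightarrow> cpoly p dvd cpoly q"
  by (metis dvdE dvd_triv_left cpoly_mult)

text \<open>Divisibility by a monic integer polynomial can be tested over the complex numbers:
  the remainder of pseudo-division by a monic divisor is an integer polynomial.\<close>

lemma monic_dvd_of_cpoly_dvd:
  fixes R f :: "int poly"
  assumes monic: "lead_coeff R = 1" and dvd: "cpoly R dvd cpoly f"
  shows "R dvd f"
proof -
  have R0: "R \<noteq> 0" using monic by auto
  obtain q r where qr: "pseudo_divmod f R = (q, r)" by (cases "pseudo_divmod f R")
  have f: "f = R * q + r" using pseudo_divmod(1)[OF R0 qr] monic by simp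
  have small: "r = 0 \<or> degree r < degree R" using pseudo_divmod(2)[OF R0 qr] .
  have "cpoly r = cpoly f - cpoly R * cpoly q" using f by (simp add: cpoly_add cpoly_mult)
  then have "cpoly R dvd cpoly r" using dvd by (simp add: dvd_diff)
  have "r = 0"
  proof (rule ccontr)
    assume "r \<noteq> 0"
    then have "cpoly r \<noteq> 0" by (simp add: map_poly_eq_0_iff)
    with \<open>cpoly R dvd cpoly r\<close> have "degree R \<le> degree r"
      using divides_degree by (fastforce simp: degree_map_poly)
    then show False using small \<open>r \<noteq> 0\<close> by simp
  qed
  then show ?thesis using f by simp
qed

lemma monom_minus_one_monic:
  assumes n: "n \<ge> 1"
  shows "degree (monom 1 n - 1 :: 'a::idom poly) = n" "lead_coeff (monom 1 n - 1 :: 'a poly) = 1"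
proof -
  have "degree (monom (1::'a) n + (- 1)) = degree (monom (1::'a) n)"
    by (rule degree_add_eq_left) (use n in \<open>simp add: degree_monom_eq\<close>)
  then show deg: "degree (monom 1 n - 1 :: 'a poly) = n" by (simp add: degree_monom_eq)
  show "lead_coeff (monom 1 n - 1 :: 'a poly) = 1" unfolding deg using n by simp
qed

lemma qb_monic: "n \<ge> 1 \<Longrightarrow> lead_coeff (qb n) = 1"
  unfolding qb_def by (rule monom_minus_one_monic(2))

section \<open>Roots of unity and the complex factorisation of \<open>q\<^sup>n - 1\<close>\<close>

definition unity_root :: "nat \<Rightarrow> nat \<Rightarrow> complex" where
  "unity_root j m = cis (2 * pi * real j / real m)"

lemma unity_root_exp: "unity_root j m = exp (2 * of_real pi * \<i> * of_nat j / of_nat m)"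
  unfolding unity_root_def cis_conv_exp by (simp add: field_simps)

text \<open>Over \<open>\<complex>\<close>, \<open>q\<^sup>n - 1\<close> is the product of \<open>q - \<zeta>\<close> over all \<open>n\<close>-th roots of unity \<open>\<zeta>\<close>:
  it is monic and has no repeated roots.\<close>

lemma monom_minus_one_roots:
  assumes n: "n \<ge> 1"
  shows "(monom 1 n - 1 :: complex poly) = (\<Prod>j<n. [:- unity_root j n, 1:])"
proof -
  define p :: "complex poly" where "p = monom 1 n - 1"
  have pz: "poly p z = z ^ n - 1" for z by (simp add: p_def poly_monom)
  have lc: "lead_coeff p = 1" unfolding p_def using monom_minus_one_monic[OF n] by simp
  have pd: "poly (pderiv p) z = of_nat n * z ^ (n - 1)" for z
    by (simp add: p_def pderiv_diff pderiv_monom poly_monom)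
  have "rsquarefree p"
    unfolding rsquarefree_roots
  proof (intro allI notI)
    fix a assume "poly p a = 0 \<and> poly (pderiv p) a = 0"
    then have "a ^ n = 1" "of_nat n * a ^ (n - 1) = 0" using pz pd by auto
    moreover have "of_nat n \<noteq> (0::complex)" using n by simp
    ultimately show False using n by (cases n) auto
  qed
  then have "p = smult (lead_coeff p) (\<Prod>z|poly p z = 0. [:-z, 1:])"
    using complex_poly_decompose_rsquarefree by simp
  also have "{z. poly p z = 0} = {z. z ^ n = 1}" using pz by auto
  also have "\<dots> = (\<lambda>j. unity_root j n) ` {..<n}"
    using complex_roots_unity[OF n] unfolding unity_root_exp by auto
  also have "(\<Prod>z\<in>(\<lambda>j. unity_root j n) ` {..<n}. [:-z, 1:]) = (\<Prod>j<n. [:- unity_root j n, 1:])"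
    by (rule prod.reindex_cong[where l="\<lambda>j. unity_root j n"])
       (use bij_betw_roots_unity[of n] in \<open>auto simp: bij_betw_def unity_root_exp\<close>)
  finally show ?thesis using lc p_def by simp
qed

definition cyclo_complex :: "nat \<Rightarrow> complex poly" where
  "cyclo_complex m = (\<Prod>j\<in>{j. j < m \<and> coprime j m}. [:- unity_root j m, 1:])"

lemma unity_root_rescale:
  assumes "d dvd n" "n \<ge> 1"
  shows "unity_root (j * (n div d)) n = unity_root j d"
proof -
  have d: "d \<ge> 1" using assms by (metis dvd_0_left_iff less_one not_le not_one_le_zero)
  have "real (n div d) = real n / real d" using assms(1) by (simp add: real_of_nat_div)
  then have "2 * pi * real (j * (n div d)) / real n = 2 * pi * real j / real d"
    using d assms(2) by (simp add: field_simps)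
  then show ?thesis unfolding unity_root_def by simp
qed

text \<open>Every \<open>n\<close>-th root of unity \<open>\<zeta>\<^sup>i\<close> is, for exactly one \<open>d | n\<close>, a primitive \<open>d\<close>-th root
  \<open>\<zeta>\<^sub>d\<^sup>j\<close>: the index \<open>i < n\<close> corresponds to the pair \<open>(n / gcd i n, i / gcd i n)\<close>.\<close>

lemma primitive_roots_bij:
  assumes n: "(n::nat) \<ge> 1"
  shows "bij_betw (\<lambda>(d, j). j * (n div d))
           (SIGMA d:{d. d dvd n}. {j. j < d \<and> coprime j d}) {..<n}"
proof (rule bij_betwI')
  fix x y assume "x \<in> (SIGMA d:{d. d dvd n}. {j. j < d \<and> coprime j d})"
    and "y \<in> (SIGMA d:{d. d dvd n}. {j. j < d \<and> coprime j d})"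
  then obtain d j d' j' where x: "x = (d, j)" "d dvd n" "j < d" "coprime j d"
    and y: "y = (d', j')" "d' dvd n" "j' < d'" "coprime j' d'" by auto
  show "((case x of (d, j) \<Rightarrow> j * (n div d)) = (case y of (d, j) \<Rightarrow> j * (n div d))) = (x = y)"
  proof
    assume "(case x of (d, j) \<Rightarrow> j * (n div d)) = (case y of (d, j) \<Rightarrow> j * (n div d))"
    then have e: "j * (n div d) = j' * (n div d')" using x y by simp
    obtain a b where a: "n = d * a" and b: "n = d' * b" using x(2) y(2) by blast
    have "d > 0" "d' > 0" using x(3) y(3) by auto
    have "n div d = a" using a \<open>d > 0\<close> by simp
    moreover have "n div d' = b" using b \<open>d' > 0\<close> by simp
    ultimately have na: "n div d = a" "n div d' = b" by simp_all
    have "j * n * d' = (j * a) * d * d'" using a by (simp add: ac_simps)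
    also have "\<dots> = (j' * b) * d * d'" using e na by simp
    also have "\<dots> = j' * n * d" using b by (simp add: ac_simps)
    finally have cross: "j * d' = j' * d" using n by simp
    have "d dvd j * d'" using cross by simp
    then have "d dvd d'" using x(4) by (metis coprime_commute coprime_dvd_mult_right_iff mult.commute)
    moreover have "d' dvd j' * d" using cross by (metis dvd_triv_right)
    then have "d' dvd d" using y(4) by (metis coprime_commute coprime_dvd_mult_right_iff mult.commute)
    ultimately have "d = d'" by (simp add: dvd_antisym)
    then show "x = y" using cross x y \<open>d > 0\<close> by simp
  qed simp
next
  fix x assume "x \<in> (SIGMA d:{d. d dvd n}. {j. j < d \<and> coprime j d})"
  then obtain d j where x: "x = (d, j)" "d dvd n" "j < d" by auto
  obtain a where a: "n = d * a" using x(2) by blast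
  have "a > 0" using a n by (metis gr0I mult_0_right not_one_le_zero)
  then have "j * a < d * a" using x(3) by simp
  then show "(case x of (d, j) \<Rightarrow> j * (n div d)) \<in> {..<n}" using x a by auto
next
  fix i assume i: "i \<in> {..<n}"
  define g where "g = gcd i n"
  have g0: "g > 0" using n g_def by simp
  have gn: "g dvd n" "g dvd i" by (simp_all add: g_def)
  define d where "d = n div g"
  define j where "j = i div g"
  have dn: "d dvd n" unfolding d_def using gn by (metis dvd_div_mult_self dvd_triv_left)
  have ndd: "n div d = g"
  proof -
    obtain c where c: "n = g * c" using gn(1) by blast
    have "c > 0" using c n by (metis gr0I mult_0_right not_one_le_zero)
    then show ?thesis unfolding d_def using c g0 by simp
  qed
  have jd: "j < d" unfolding j_def d_def
    using i gn g0 by (auto simp: div_less_iff_less_mult dvd_div_mult_self)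
  have cop: "coprime j d" unfolding j_def d_def g_def using n by (intro div_gcd_coprime) simp
  have "j * (n div d) = i" using ndd gn unfolding j_def by simp
  then show "\<exists>x\<in>(SIGMA d:{d. d dvd n}. {j. j < d \<and> coprime j d}).
      i = (case x of (d, j) \<Rightarrow> j * (n div d))"
    using dn jd cop by (intro bexI[of _ "(d, j)"]) auto
qed

text \<open>Regrouping the roots of unity by their order: \<open>q\<^sup>n - 1 = \<Prod>\<^sub>d\<^sub>|\<^sub>n \<Phi>\<^sub>d\<close> over \<open>\<complex>\<close>.\<close>

lemma monom_minus_one_cyclo_complex:
  assumes n: "n \<ge> 1"
  shows "(monom 1 n - 1 :: complex poly) = (\<Prod>d\<in>{d. d dvd n}. cyclo_complex d)"
proof -
  have fin: "finite {d. d dvd n}" using n by (simp add: finite_divisors_nat)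
  have "(\<Prod>d\<in>{d. d dvd n}. cyclo_complex d) =
      (\<Prod>(d, j)\<in>(SIGMA d:{d. d dvd n}. {j. j < d \<and> coprime j d}). [:- unity_root j d, 1:])"
    unfolding cyclo_complex_def using fin by (subst prod.Sigma) auto
  also have "\<dots> = (\<Prod>(d, j)\<in>(SIGMA d:{d. d dvd n}. {j. j < d \<and> coprime j d}).
      [:- unity_root (j * (n div d)) n, 1:])"
    by (intro prod.cong refl) (auto intro: unity_root_rescale[OF _ n, symmetric])
  also have "\<dots> = (\<Prod>i<n. [:- unity_root i n, 1:])"
    using prod.reindex_bij_betw[OF primitive_roots_bij[OF n], of "\<lambda>i. [:- unity_root i n, 1:]"]
    by (simp add: split_def)
  finally show ?thesis using monom_minus_one_roots[OF n] by simp
qed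


section \<open>The integer cyclotomic polynomials\<close>

text \<open>\<open>\<Phi>\<^sub>m\<close> has integer coefficients and is monic: by induction on \<open>m\<close>, it is the quotient of
  \<open>q\<^sup>m - 1\<close> by the monic integer polynomial \<open>\<Prod>\<^sub>d\<^sub>|\<^sub>m\<^sub>,\<^sub>d\<^sub><\<^sub>m \<Phi>\<^sub>d\<close>.\<close>

lemma cyclo_complex_integral:
  "m \<ge> 1 \<Longrightarrow> \<exists>p. cpoly p = cyclo_complex m \<and> lead_coeff p = 1"
proof (induction m rule: less_induct)
  case (less m)
  define S where "S = {d. d dvd m \<and> d < m}"
  have "\<forall>d\<in>S. \<exists>p. cpoly p = cyclo_complex d \<and> lead_coeff p = 1"
  proof
    fix d assume "d \<in> S"
    then have "d < m" "d dvd m" unfolding S_def by auto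
    moreover have "d \<ge> 1" using \<open>d dvd m\<close> less.prems by (cases "d = 0") auto
    ultimately show "\<exists>p. cpoly p = cyclo_complex d \<and> lead_coeff p = 1" using less.IH by blast
  qed
  then obtain f where f: "\<forall>d\<in>S. cpoly (f d) = cyclo_complex d \<and> lead_coeff (f d) = 1"
    by metis
  define R where "R = (\<Prod>d\<in>S. f d)"
  have monic: "lead_coeff R = 1" unfolding R_def lead_coeff_prod
    by (rule prod.neutral) (use f in blast)
  have cR: "cpoly R = (\<Prod>d\<in>S. cyclo_complex d)" unfolding R_def cpoly_prod
    by (rule prod.cong) (use f in auto)
  have "{d. d dvd m} = insert m S" unfolding S_def using less.prems by (auto dest: dvd_imp_le)
  then have split: "cpoly (qb m) = cyclo_complex m * cpoly R"
    unfolding cpoly_qb monom_minus_one_cyclo_complex[OF less.prems] cR S_def by simp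
  then obtain Q where Q: "qb m = R * Q"
    using monic_dvd_of_cpoly_dvd[OF monic] by (metis dvdE dvd_triv_right)
  have "cpoly R \<noteq> 0" using monic by (auto simp: map_poly_eq_0_iff)
  moreover have "cpoly R * cpoly Q = cpoly R * cyclo_complex m"
    using Q split by (metis cpoly_mult mult.commute)
  ultimately have "cpoly Q = cyclo_complex m" by simp
  moreover have "lead_coeff Q = 1"
    using qb_monic[OF less.prems] monic Q by (simp add: lead_coeff_mult)
  ultimately show ?case by blast
qed

lemma cyclotomic_integral:
  assumes "m \<ge> 1"
  shows "cpoly (cyclotomic m) = cyclo_complex m" and "lead_coeff (cyclotomic m) = 1"
proof -
  obtain p where p: "cpoly p = cyclo_complex m" "lead_coeff p = 1"
    using cyclo_complex_integral[OF assms] by blast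
  have "cyclotomic m = p" unfolding cyclotomic_def
  proof (rule the_equality)
    show "cpoly p = (\<Prod>j\<in>{j. j < m \<and> coprime j m}. [:- cis (2 * pi * real j / real m), 1:])"
      using p(1) unfolding cyclo_complex_def unity_root_def .
  next
    fix x assume "cpoly x = (\<Prod>j\<in>{j. j < m \<and> coprime j m}. [:- cis (2 * pi * real j / real m), 1:])"
    then show "x = p" using p(1) cpoly_inj unfolding cyclo_complex_def unity_root_def by simp
  qed
  then show "cpoly (cyclotomic m) = cyclo_complex m" "lead_coeff (cyclotomic m) = 1" using p by auto
qed

lemma cyclotomic_nonzero: "m \<ge> 1 \<Longrightarrow> cyclotomic m \<noteq> 0"
  using cyclotomic_integral(2) by fastforce

lemma qb_cyclotomic:
  assumes "n \<ge> 1"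
  shows "qb n = (\<Prod>d\<in>{d. d dvd n}. cyclotomic d)"
proof (rule cpoly_inj)
  have "cpoly (\<Prod>d\<in>{d. d dvd n}. cyclotomic d) = (\<Prod>d\<in>{d. d dvd n}. cyclo_complex d)"
    unfolding cpoly_prod using assms
    by (intro prod.cong refl cyclotomic_integral(1)) (auto intro: Nat.gr0I)
  then show "cpoly (qb n) = cpoly (\<Prod>d\<in>{d. d dvd n}. cyclotomic d)"
    using monom_minus_one_cyclo_complex[OF assms] by (simp add: cpoly_qb)
qed

section \<open>Distinct cyclotomic polynomials are coprime in \<open>\<int>[q]\<close>\<close>

lemma root_cyclo_complex:
  assumes "poly (cyclo_complex m) z = 0"
  shows "\<exists>j. j < m \<and> coprime j m \<and> z = unity_root j m"
proof -
  have "(\<Prod>j\<in>{j. j < m \<and> coprime j m}. z - unity_root j m) = 0"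
    using assms unfolding cyclo_complex_def by (simp add: poly_prod)
  then show ?thesis by (subst (asm) prod_zero_iff) auto
qed

lemma primitive_root_power_eq_1:
  assumes m: "m \<ge> 1" and c: "coprime j m"
  shows "unity_root j m ^ e = 1 \<longleftrightarrow> m dvd e"
proof -
  have "unity_root j m ^ e = cis (real e * (2 * pi * real j / real m))"
    unfolding unity_root_def by (rule Complex.DeMoivre)
  also have "\<dots> = unity_root (j * e) m" unfolding unity_root_def by (simp add: field_simps)
  also have "\<dots> = 1 \<longleftrightarrow> m dvd j * e"
    unfolding unity_root_exp by (rule complex_root_unity_eq_1[OF m])
  also have "\<dots> \<longleftrightarrow> m dvd e" using c by (metis coprime_commute coprime_dvd_mult_right_iff)
  finally show ?thesis .
qed

text \<open>A common factor of \<open>\<Phi>\<^sub>m\<close> and \<open>\<Phi>\<^sub>m\<^sub>'\<close> is either a constant dividing the leading coefficient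
  \<open>1\<close>, or has a complex root, which would be a primitive root of both orders \<open>m\<close> and \<open>m'\<close>.\<close>

lemma cyclotomic_coprime:
  assumes m: "m \<ge> 1" and m': "m' \<ge> 1" and ne: "m \<noteq> m'"
  shows "coprime (cyclotomic m) (cyclotomic m')"
proof (rule coprimeI)
  fix c assume c: "c dvd cyclotomic m" and c': "c dvd cyclotomic m'"
  show "is_unit c"
  proof (cases "degree c = 0")
    case True
    then obtain c0 where c0: "c = [:c0:]" by (metis degree_eq_zeroE)
    have "c0 dvd lead_coeff (cyclotomic m)" using c unfolding c0 const_poly_dvd_iff by blast
    then show ?thesis
      unfolding c0 using cyclotomic_integral(2)[OF m] by (simp add: is_unit_const_poly_iff)
  next
    case False
    then have "\<not> constant (poly (cpoly c))" by (simp add: constant_degree degree_map_poly)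
    then obtain z where z: "poly (cpoly c) z = 0" using fundamental_theorem_of_algebra by blast
    have root: "poly (cyclo_complex k) z = 0" if "c dvd cyclotomic k" "k \<ge> 1" for k
      using cpoly_dvd[OF that(1)] z cyclotomic_integral(1)[OF that(2)]
      by (metis dvd_def mult_eq_0_iff poly_mult)
    obtain j where j: "coprime j m" "z = unity_root j m" using root_cyclo_complex root[OF c m] by blast
    obtain j' where j': "coprime j' m'" "z = unity_root j' m'"
      using root_cyclo_complex root[OF c' m'] by blast
    have order: "z ^ e = 1 \<longleftrightarrow> m dvd e" "z ^ e = 1 \<longleftrightarrow> m' dvd e" for e
      using primitive_root_power_eq_1[OF m j(1)] primitive_root_power_eq_1[OF m' j'(1)] j j'
      by simp_all
    have "m' dvd m" "m dvd m'" using order[of m] order[of m'] by simp_all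
    then show ?thesis using ne dvd_antisym by blast
  qed
qed

section \<open>Comaximality in \<open>\<int>[q,q\<^sup>-\<^sup>1]\<close>\<close>

text \<open>Two polynomials generate the unit ideal of the Laurent polynomial ring iff some power of
  \<open>q\<close> is a \<open>\<int>[q]\<close>-linear combination of them.\<close>

definition laurent_comax :: "int poly \<Rightarrow> int poly \<Rightarrow> bool" where
  "laurent_comax x y \<longleftrightarrow> (\<exists>N u v. monom 1 N = u * x + v * y)"

lemma monom_one_mult: "monom (1::int) a * monom 1 b = monom 1 (a + b)"
  by (simp add: mult_monom)

lemma laurent_comax_sym: "laurent_comax x y \<Longrightarrow> laurent_comax y x"
  unfolding laurent_comax_def by (metis add.commute)

lemma laurent_comax_one: "laurent_comax x 1"
  unfolding laurent_comax_def by (rule exI[of _ 0], rule exI[of _ 0], rule exI[of _ 1]) simp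

lemma laurent_comax_mult:
  assumes "laurent_comax x y" "laurent_comax x z"
  shows "laurent_comax x (y * z)"
proof -
  obtain N1 u1 v1 where 1: "monom 1 N1 = u1 * x + v1 * y" using assms(1) laurent_comax_def by blast
  obtain N2 u2 v2 where 2: "monom 1 N2 = u2 * x + v2 * z" using assms(2) laurent_comax_def by blast
  have "monom 1 (N1 + N2) = (u1 * x + v1 * y) * (u2 * x + v2 * z)"
    using 1 2 monom_one_mult by metis
  also have "\<dots> = (u1 * u2 * x + u1 * v2 * z + v1 * y * u2) * x + (v1 * v2) * (y * z)"
    by (simp add: algebra_simps)
  finally show ?thesis unfolding laurent_comax_def by blast
qed

lemma laurent_comax_power: "laurent_comax x y \<Longrightarrow> laurent_comax x (y ^ n)"
  by (induction n) (simp_all add: laurent_comax_one laurent_comax_mult)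

lemma laurent_comax_prod:
  "finite S \<Longrightarrow> (\<And>s. s \<in> S \<Longrightarrow> laurent_comax x (f s)) \<Longrightarrow> laurent_comax x (\<Prod>s\<in>S. f s)"
  by (induction S rule: finite_induct) (simp_all add: laurent_comax_one laurent_comax_mult)

lemma laurent_comax_dvd:
  assumes "laurent_comax x y" "x' dvd x" "y' dvd y"
  shows "laurent_comax x' y'"
proof -
  obtain N u v where 1: "monom 1 N = u * x + v * y" using assms(1) laurent_comax_def by blast
  obtain a b where "x = x' * a" "y = y' * b" using assms(2,3) by blast
  then have "monom 1 N = (u * a) * x' + (v * b) * y'" using 1 by (simp add: algebra_simps)
  then show ?thesis unfolding laurent_comax_def by blast
qed

text \<open>The geometric sums \<open>1 + q\<^sup>g + \<dots> + q\<^sup>g\<^sup>(\<^sup>r\<^sup>-\<^sup>1\<^sup>) = (q\<^sup>g\<^sup>r - 1) / (q\<^sup>g - 1)\<close>.\<close>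

definition geom :: "nat \<Rightarrow> nat \<Rightarrow> int poly" where
  "geom g r = (\<Sum>i<r. monom 1 (g * i))"

lemma qb_mult_geom: "qb g * geom g r = qb (g * r)"
proof (induction r)
  case (Suc r)
  have "qb g * geom g (Suc r) = qb (g * r) + qb g * monom 1 (g * r)"
    using Suc by (simp add: geom_def algebra_simps)
  also have "\<dots> = qb (g * Suc r)" by (simp add: qb_def algebra_simps monom_one_mult)
  finally show ?case .
qed (simp add: geom_def qb_def)

lemma geom_add: "geom g (a + b) = geom g b + monom 1 (g * b) * geom g a"
proof (induction a)
  case (Suc a)
  have "geom g (Suc a + b) = geom g b + monom 1 (g * b) * (geom g a + monom 1 (g * a))"
    using Suc by (simp add: geom_def algebra_simps monom_one_mult)
  then show ?case by (simp add: geom_def)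
qed (simp add: geom_def)

lemma geom_one: "geom g 1 = 1"
  by (simp add: geom_def)

text \<open>One Euclidean step: \<open>(G\<^sub>a, G\<^sub>b)\<close> and \<open>(G\<^sub>a\<^sub>+\<^sub>b, G\<^sub>b)\<close> generate the same ideal up to units.\<close>

lemma laurent_comax_geom_add:
  assumes "laurent_comax (geom g a) (geom g b)"
  shows "laurent_comax (geom g (a + b)) (geom g b)"
proof -
  obtain N u v where e: "monom 1 N = u * geom g a + v * geom g b"
    using assms unfolding laurent_comax_def by blast
  have "monom 1 (N + g * b) = monom 1 (g * b) * (u * geom g a + v * geom g b)"
    using e monom_one_mult by (metis add.commute)
  also have "\<dots> = u * geom g (a + b) + (v * monom 1 (g * b) - u) * geom g b"
    by (simp add: geom_add algebra_simps)
  finally show ?thesis unfolding laurent_comax_def by blast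
qed

lemma laurent_comax_geom:
  "1 \<le> a \<Longrightarrow> 1 \<le> b \<Longrightarrow> coprime a b \<Longrightarrow> laurent_comax (geom g a) (geom g b)"
proof (induction "a + b" arbitrary: a b rule: less_induct)
  case less
  have "a = b \<Longrightarrow> a = 1" using less.prems(3) by simp
  then consider "a = 1 \<or> b = 1" | "b < a" | "a < b" by linarith
  then show ?case
  proof cases
    case 1
    then show ?thesis using laurent_comax_one laurent_comax_sym geom_one by metis
  next
    case 2
    have "coprime (a - b) b" using less.prems(3) 2
      by (metis coprime_diff_one_left_nat coprime_commute coprime_iff_gcd_eq_1 gcd_diff1_nat less_imp_le)
    then have "laurent_comax (geom g (a - b)) (geom g b)" using less.hyps[of "a - b" b] 2 less.prems by auto
    then show ?thesis using laurent_comax_geom_add[of g "a - b" b] 2 by simp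
  next
    case 3
    have "coprime (b - a) a" using less.prems(3) 3
      by (metis coprime_diff_one_left_nat coprime_commute coprime_iff_gcd_eq_1 gcd_diff1_nat less_imp_le)
    then have "laurent_comax (geom g (b - a)) (geom g a)" using less.hyps[of "b - a" a] 3 less.prems by auto
    then show ?thesis using laurent_comax_geom_add[of g "b - a" a] 3 laurent_comax_sym by simp
  qed
qed

lemma cyclotomic_dvd_geom:
  assumes d: "d \<ge> 1" and g: "g \<ge> 1" and gd: "g dvd d" and ndg: "\<not> d dvd g"
  shows "cyclotomic d dvd geom g (d div g)"
proof -
  have fin: "finite {e. e dvd d}" using d by (simp add: finite_divisors_nat)
  have sub: "{e. e dvd d} \<inter> {e. e dvd g} = {e. e dvd g}" using gd by (auto intro: dvd_trans)
  have "qb g * geom g (d div g) = qb d" using qb_mult_geom[of g "d div g"] gd by simp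
  also have "\<dots> = qb g * (\<Prod>e\<in>{e. e dvd d} - {e. e dvd g}. cyclotomic e)"
    using prod.Int_Diff[OF fin, of cyclotomic "{e. e dvd g}"]
    unfolding qb_cyclotomic[OF d] qb_cyclotomic[OF g] sub .
  moreover have "qb g \<noteq> 0" using qb_monic[OF g] by auto
  ultimately have "geom g (d div g) = (\<Prod>e\<in>{e. e dvd d} - {e. e dvd g}. cyclotomic e)"
    by simp
  moreover have "cyclotomic d dvd (\<Prod>e\<in>{e. e dvd d} - {e. e dvd g}. cyclotomic e)"
    by (rule dvd_prodI) (use fin ndg in auto)
  ultimately show ?thesis by simp
qed

text \<open>\<open>\<Phi>\<^sub>d\<close> and \<open>\<Phi>\<^sub>d\<^sub>'\<close> are comaximal in \<open>\<int>[q,q\<^sup>-\<^sup>1]\<close> when neither index divides the other: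
  with \<open>g = gcd d d'\<close> they divide the comaximal geometric sums \<open>G\<^sub>d\<^sub>/\<^sub>g\<close> and \<open>G\<^sub>d\<^sub>'\<^sub>/\<^sub>g\<close>.\<close>

lemma laurent_comax_cyclotomic:
  assumes d: "d \<ge> 1" and d': "d' \<ge> 1" and n1: "\<not> d dvd d'" and n2: "\<not> d' dvd d"
  shows "laurent_comax (cyclotomic d) (cyclotomic d')"
proof -
  define g where "g = gcd d d'"
  have g: "g \<ge> 1" using d unfolding g_def by (simp add: Suc_le_eq)
  have gd: "g dvd d" "g dvd d'" unfolding g_def by simp_all
  have "d div g \<ge> 1" "d' div g \<ge> 1"
    using gd d d' g by (simp_all add: dvd_imp_le div_greater_zero_iff Suc_le_eq)
  moreover have "coprime (d div g) (d' div g)" unfolding g_def using d by (intro div_gcd_coprime) simp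
  ultimately have "laurent_comax (geom g (d div g)) (geom g (d' div g))"
    by (rule laurent_comax_geom)
  moreover have "cyclotomic d dvd geom g (d div g)"
    using cyclotomic_dvd_geom[OF d g gd(1)] n1 gd(2) dvd_trans by blast
  moreover have "cyclotomic d' dvd geom g (d' div g)"
    using cyclotomic_dvd_geom[OF d' g gd(2)] n2 gd(1) dvd_trans by blast
  ultimately show ?thesis by (rule laurent_comax_dvd)
qed


section \<open>Products of cyclotomic polynomials\<close>

text \<open>\<open>cyc_prod L e = \<Prod>\<^sub>d\<^sub>=\<^sub>1\<^sub>.\<^sub>.\<^sub>L \<Phi>\<^sub>d\<^sup>e\<^sup>(\<^sup>d\<^sup>)\<close>; all polynomials of the theorem have this shape.\<close>

definition cyc_prod :: "nat \<Rightarrow> (nat \<Rightarrow> nat) \<Rightarrow> int poly" where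
  "cyc_prod L e = (\<Prod>d\<in>{1..L}. cyclotomic d ^ e d)"

lemma cyc_prod_mult: "cyc_prod L a * cyc_prod L b = cyc_prod L (\<lambda>d. a d + b d)"
  unfolding cyc_prod_def by (simp add: prod.distrib power_add)

lemma cyc_prod_monic: "lead_coeff (cyc_prod L e) = 1"
  unfolding cyc_prod_def lead_coeff_prod lead_coeff_power by (simp add: cyclotomic_integral(2))

lemma cyc_prod_nonzero: "cyc_prod L e \<noteq> 0"
  using cyc_prod_monic[of L e] by auto

lemma cyc_prod_split:
  "(\<And>d. d \<in> {1..L} \<Longrightarrow> a d \<le> b d) \<Longrightarrow> cyc_prod L b = cyc_prod L a * cyc_prod L (\<lambda>d. b d - a d)"
  unfolding cyc_prod_mult by (unfold cyc_prod_def, intro prod.cong refl) auto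

lemma cyc_prod_indicator:
  assumes "{d \<in> {1..L}. Q d} = S"
  shows "(\<Prod>d\<in>S. cyclotomic d) = cyc_prod L (\<lambda>d. if Q d then 1 else 0)"
proof -
  have "(\<Prod>d\<in>S. cyclotomic d) = (\<Prod>d\<in>{1..L}. if Q d then cyclotomic d else 1)"
    using prod.inter_filter[of "{1..L}" cyclotomic Q] assms by simp
  then show ?thesis unfolding cyc_prod_def by (simp add: if_distrib cong: if_cong)
qed

lemma qb_cyc_prod:
  assumes "1 \<le> j" "j \<le> L"
  shows "qb j = cyc_prod L (\<lambda>d. if d dvd j then 1 else 0)"
  unfolding qb_cyclotomic[OF assms(1)] using assms
  by (intro cyc_prod_indicator) (auto intro: Nat.gr0I dest: dvd_imp_le)

lemma Suc_div_eq: "(d::nat) \<ge> 1 \<Longrightarrow> Suc b div d = b div d + (if d dvd Suc b then 1 else 0)"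
  by (auto simp: div_Suc dvd_eq_mod_eq_0)

lemma qfall_cyc_prod:
  "r \<le> u \<Longrightarrow> u \<le> L \<Longrightarrow> qfall u r = cyc_prod L (\<lambda>d. u div d - (u - r) div d)"
proof (induction r)
  case 0
  then show ?case by (simp add: qfall_def cyc_prod_def)
next
  case (Suc r)
  define v where "v = u - Suc r"
  have uv: "u - r = Suc v" using Suc.prems unfolding v_def by simp
  have "qfall u (Suc r) = qfall u r * qb (u - r)" by (simp add: qfall_def)
  also have "\<dots> = cyc_prod L (\<lambda>d. (u div d - Suc v div d) + (if d dvd Suc v then 1 else 0))"
    using Suc qb_cyc_prod[of "u - r" L] uv by (simp add: cyc_prod_mult)
  also have "\<dots> = cyc_prod L (\<lambda>d. u div d - v div d)"
    unfolding cyc_prod_def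
  proof (intro prod.cong refl)
    fix d :: nat assume "d \<in> {1..L}"
    moreover have "Suc v div d \<le> u div d" using uv by (intro div_le_mono) simp
    ultimately show "cyclotomic d ^ (u div d - Suc v div d + (if d dvd Suc v then 1 else 0)) =
        cyclotomic d ^ (u div d - v div d)" using Suc_div_eq[of d v] by simp
  qed
  finally show ?case unfolding v_def .
qed

lemma qfact_cyc_prod: "i \<le> L \<Longrightarrow> qfact i = cyc_prod L (\<lambda>d. i div d)"
  unfolding qfact_def using qfall_cyc_prod[of i i L] by simp

text \<open>A prime of \<open>\<int>[q]\<close> divides at most one \<open>\<Phi>\<^sub>d\<close>, so its multiplicity in a cyclotomic
  product is proportional to a single exponent (or always zero).\<close>

lemma multiplicity_cyc_prod:
  fixes p :: "int poly"
  assumes p: "prime p"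
  obtains "\<And>e. multiplicity p (cyc_prod L e) = 0"
    | d0 m where "d0 \<in> {1..L}" "\<And>e. multiplicity p (cyc_prod L e) = e d0 * m"
proof -
  have sum: "multiplicity p (cyc_prod L e) = (\<Sum>d\<in>{1..L}. e d * multiplicity p (cyclotomic d))"
    for e unfolding cyc_prod_def using p cyclotomic_nonzero
    by (subst prime_elem_multiplicity_prod_distrib)
       (auto intro!: sum.cong prime_elem_multiplicity_power_distrib)
  show ?thesis
  proof (cases "\<exists>d0\<in>{1..L}. multiplicity p (cyclotomic d0) > 0")
    case True
    then obtain d0 where d0: "d0 \<in> {1..L}" "multiplicity p (cyclotomic d0) > 0" by blast
    have "multiplicity p (cyclotomic d) = 0" if d: "d \<in> {1..L} - {d0}" for d
    proof (rule ccontr)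
      assume "multiplicity p (cyclotomic d) \<noteq> 0"
      then have "p dvd cyclotomic d" "p dvd cyclotomic d0"
        using d d0 p cyclotomic_nonzero by (auto simp: prime_multiplicity_gt_zero_iff)
      then have "is_unit p"
        using cyclotomic_coprime[of d0 d] d d0(1) coprime_common_divisor by auto
      then show False using p not_prime_unit by blast
    qed
    then have "multiplicity p (cyc_prod L e) = e d0 * multiplicity p (cyclotomic d0)" for e
      unfolding sum using d0(1) by (subst sum.remove[of _ d0]) auto
    then show ?thesis using that(2) d0(1) by blast
  next
    case False
    then show ?thesis using that(1) sum by simp
  qed
qed

text \<open>The gcd of finitely many cyclotomic products is the cyclotomic product with the
  pointwise minimal exponents; both sides are normalised since they are monic.\<close>

lemma Gcd_cyc_prod:
  fixes E :: "nat \<Rightarrow> nat \<Rightarrow> nat"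
  assumes fin: "finite I" and ne: "I \<noteq> {}"
  shows "Gcd ((\<lambda>i. cyc_prod L (E i)) ` I) = cyc_prod L (\<lambda>d. Min ((\<lambda>i. E i d) ` I))"
    (is "_ = cyc_prod L ?\<mu>")
proof (rule Gcd_eqI)
  show "normalize (cyc_prod L ?\<mu>) = cyc_prod L ?\<mu>"
    by (simp add: normalize_poly_eq_map_poly cyc_prod_monic)
  show "cyc_prod L ?\<mu> dvd b" if b: "b \<in> (\<lambda>i. cyc_prod L (E i)) ` I" for b
  proof -
    obtain i where i: "i \<in> I" "b = cyc_prod L (E i)" using b by blast
    have "?\<mu> d \<le> E i d" for d using fin i(1) by (intro Min_le) auto
    then show ?thesis using cyc_prod_split[of L ?\<mu> "E i"] i(2) by simp
  qed
  fix c assume common: "\<And>b. b \<in> (\<lambda>i. cyc_prod L (E i)) ` I \<Longrightarrow> c dvd b"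
  then have c_dvd: "c dvd cyc_prod L (E i)" if "i \<in> I" for i using that by blast
  obtain i0 where i0: "i0 \<in> I" using ne by blast
  show "c dvd cyc_prod L ?\<mu>"
  proof (rule multiplicity_le_imp_dvd)
    show "c \<noteq> 0" using c_dvd[OF i0] cyc_prod_nonzero by auto
    fix p :: "int poly" assume p: "prime p"
    have c_le: "multiplicity p c \<le> multiplicity p (cyc_prod L (E i))" if "i \<in> I" for i
      by (rule dvd_imp_multiplicity_le[OF c_dvd[OF that] cyc_prod_nonzero])
    from p show "multiplicity p c \<le> multiplicity p (cyc_prod L ?\<mu>)"
    proof (cases rule: multiplicity_cyc_prod[of p L])
      case 1
      then show ?thesis using c_le[OF i0] by simp
    next
      case (2 d0 m)
      have "?\<mu> d0 \<in> (\<lambda>i. E i d0) ` I" using fin ne by (intro Min_in) auto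
      then obtain i1 where i1: "i1 \<in> I" "E i1 d0 = ?\<mu> d0" by auto
      have "multiplicity p c \<le> multiplicity p (cyc_prod L (E i1))" by (rule c_le[OF i1(1)])
      also have "\<dots> = ?\<mu> d0 * m" using 2(2) i1(2) by simp
      also have "\<dots> = multiplicity p (cyc_prod L ?\<mu>)" using 2(2) by simp
      finally show ?thesis .
    qed
  qed
qed

lemma laurent_comax_cyc_prod:
  assumes "\<And>d d'. d \<in> {1..L} \<Longrightarrow> d' \<in> {1..L} \<Longrightarrow> a d > 0 \<Longrightarrow> b d' > 0 \<Longrightarrow>
             laurent_comax (cyclotomic d) (cyclotomic d')"
  shows "laurent_comax (cyc_prod L a) (cyc_prod L b)"
proof -
  have factors: "laurent_comax (cyclotomic d' ^ b d') (cyclotomic d ^ a d)"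
    if "d \<in> {1..L}" "d' \<in> {1..L}" for d d'
  proof (cases "a d = 0 \<or> b d' = 0")
    case True
    then show ?thesis using laurent_comax_one laurent_comax_sym by auto
  next
    case False
    then show ?thesis using assms[OF that] laurent_comax_power laurent_comax_sym by auto
  qed
  have "laurent_comax (cyclotomic d' ^ b d') (cyc_prod L a)" if "d' \<in> {1..L}" for d'
    unfolding cyc_prod_def using factors that by (intro laurent_comax_prod) auto
  then have "laurent_comax (cyc_prod L a) (cyc_prod L b)"
    unfolding cyc_prod_def[of L b] by (intro laurent_comax_prod) (auto intro: laurent_comax_sym)
  then show ?thesis .
qed

section \<open>Ideals with two generators in \<open>\<int>[q,q\<^sup>-\<^sup>1]\<close>\<close>

lemma laurent_ideal2_eq_cofactors:
  assumes a: "a = g * a'" and b: "b = monom 1 N * (g * b')" and comax: "laurent_comax a' b'"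
  shows "laurent_ideal2_eq a b g"
  unfolding laurent_ideal2_eq_def laurent_dvd_def
proof (intro allI iffI)
  fix x assume "\<exists>M u v. monom 1 M * x = u * a + v * b"
  then obtain M u v where "monom 1 M * x = u * a + v * b" by blast
  moreover have "g dvd u * a + v * b" using a b by simp
  ultimately show "\<exists>M. g dvd monom 1 M * x" by metis
next
  fix x assume "\<exists>M. g dvd monom 1 M * x"
  then obtain M y where y: "monom 1 M * x = g * y" by blast
  obtain N' U V where uv: "monom 1 N' = U * a' + V * b'"
    using comax unfolding laurent_comax_def by blast
  have "monom 1 (N + N' + M) * x = monom 1 N * monom 1 N' * (monom 1 M * x)"
    by (simp add: monom_one_mult ac_simps)
  also have "\<dots> = (monom 1 N * y * U) * a + (y * V) * b"
    unfolding uv y a b by (simp add: algebra_simps)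
  finally show "\<exists>M u v. monom 1 M * x = u * a + v * b" by blast
qed

lemma laurent_ideal2_eq_cyc_prod:
  assumes GA: "\<And>d. d \<in> {1..L} \<Longrightarrow> G d \<le> A d"
    and GB: "\<And>d. d \<in> {1..L} \<Longrightarrow> G d \<le> B d"
    and apart: "\<And>d d'. d \<in> {1..L} \<Longrightarrow> d' \<in> {1..L} \<Longrightarrow> G d < A d \<Longrightarrow> G d' < B d' \<Longrightarrow>
                  \<not> d dvd d' \<and> \<not> d' dvd d"
  shows "laurent_ideal2_eq (cyc_prod L A) (monom 1 N * cyc_prod L B) (cyc_prod L G)"
proof (rule laurent_ideal2_eq_cofactors)
  show "cyc_prod L A = cyc_prod L G * cyc_prod L (\<lambda>d. A d - G d)" by (rule cyc_prod_split[OF GA])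
  show "monom 1 N * cyc_prod L B = monom 1 N * (cyc_prod L G * cyc_prod L (\<lambda>d. B d - G d))"
    using cyc_prod_split[OF GB] by simp
  show "laurent_comax (cyc_prod L (\<lambda>d. A d - G d)) (cyc_prod L (\<lambda>d. B d - G d))"
    using apart by (intro laurent_comax_cyc_prod laurent_comax_cyclotomic) auto
qed


section \<open>The exponents of \<open>\<Phi>\<^sub>d\<close> in \<open>h\<^sub>l\<^sub>,\<^sub>K\<^sub>,\<^sub>i\<close> and \<open>g\<^sub>l\<^sub>,\<^sub>K\<close>\<close>

text \<open>With \<open>l = n + K\<close>, the exponent of \<open>\<Phi>\<^sub>d\<close> in \<open>h\<^sub>l\<^sub>,\<^sub>K\<^sub>,\<^sub>i = {l-i}\<^sub>q\<^sub>,\<^sub>K\<^sub>-\<^sub>i {i}\<^sub>q!\<close>, and in their gcd.\<close>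

definition hexp :: "nat \<Rightarrow> nat \<Rightarrow> nat \<Rightarrow> nat \<Rightarrow> nat" where
  "hexp n K i d = (n + K - i) div d - n div d + i div d"

definition gexp :: "nat \<Rightarrow> nat \<Rightarrow> nat \<Rightarrow> nat" where
  "gexp n K d = Min ((\<lambda>i. hexp n K i d) ` {0..K})"

lemma hlki_cyc_prod: "i \<le> K \<Longrightarrow> hlki (n + K) K i = cyc_prod (n + K) (hexp n K i)"
  unfolding hlki_def hexp_def
  using qfall_cyc_prod[of "K - i" "n + K - i" "n + K"] qfact_cyc_prod[of i "n + K"]
  by (simp add: cyc_prod_mult)

lemma glk_cyc_prod: "glk (n + K) K = cyc_prod (n + K) (gexp n K)"
proof -
  have "glk (n + K) K = Gcd ((\<lambda>i. cyc_prod (n + K) (hexp n K i)) ` {0..K})"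
    unfolding glk_def by (intro arg_cong[where f = Gcd] image_cong) (auto simp: hlki_cyc_prod)
  then show ?thesis unfolding gexp_def by (simp add: Gcd_cyc_prod)
qed

text \<open>The term \<open>i = K\<close> of the gcd is \<open>{K}\<^sub>q!\<close> itself.\<close>

lemma gexp_le: "gexp n K d \<le> K div d"
proof -
  have "gexp n K d \<le> hexp n K K d" unfolding gexp_def by (intro Min_le) auto
  then show ?thesis by (simp add: hexp_def)
qed

lemma qfact_cofactor:
  "K \<le> L \<Longrightarrow> qfact K = cyc_prod L (gexp n K) * cyc_prod L (\<lambda>d. K div d - gexp n K d)"
  using qfact_cyc_prod[of K L] cyc_prod_split[of L "gexp n K" "\<lambda>d. K div d"] gexp_le by simp

text \<open>For \<open>d | n\<close> the exponent \<open>hexp\<close> is \<open>\<lfloor>(K-i)/d\<rfloor> + \<lfloor>i/d\<rfloor>\<close>, which differs from \<open>\<lfloor>K/d\<rfloor>\<close>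
  by at most one, and not at all when \<open>d | K + 1\<close>.\<close>

lemma hexp_divisor:
  assumes "d dvd n" "i \<le> K"
  shows "hexp n K i d = (K - i) div d + i div d"
proof -
  have "n + K - i = n + (K - i)" using assms(2) by simp
  then show ?thesis unfolding hexp_def using div_plus_div_distrib_dvd_left[OF assms(1)] by simp
qed

lemma div_split_bounds:
  fixes K i d :: nat
  assumes d: "d \<ge> 1" and i: "i \<le> K"
  shows "K div d \<le> (K - i) div d + i div d + 1"
    and "d dvd Suc K \<Longrightarrow> K div d \<le> (K - i) div d + i div d"
proof -
  define s where "s = (K - i) mod d + i mod d"
  have K: "K div d = (K - i) div d + i div d + s div d"
    unfolding s_def using div_add1_eq[of "K - i" i d] i by simp
  have "(K - i) mod d \<le> d - 1" "i mod d \<le> d - 1"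
    using d by (simp_all add: less_Suc_eq_le[symmetric])
  then have s_le: "s \<le> 2 * d - 2" unfolding s_def by simp
  then have "s div d < 2" using d by (intro less_mult_imp_div_less) simp
  then have "s div d \<le> 1" by simp
  then show "K div d \<le> (K - i) div d + i div d + 1" using K by simp
  assume "d dvd Suc K"
  then have "Suc K mod d = 0" by simp
  then have "Suc (K mod d) = d" by (simp add: mod_Suc split: if_splits)
  moreover have "s mod d = K mod d" unfolding s_def using i by (metis le_add_diff_inverse2 mod_add_eq)
  moreover have "s = d * (s div d) + s mod d" by simp
  ultimately have "s div d = 0" using s_le \<open>s div d \<le> 1\<close> by (cases "s div d") auto
  then show "K div d \<le> (K - i) div d + i div d" using K by simp
qed

text \<open>The exponent of \<open>\<Phi>\<^sub>d\<close> in \<open>{k}\<^sub>q {k-1}\<^sub>q! / g\<^sub>l\<^sub>,\<^sub>k\<^sub>-\<^sub>1\<close> is exactly one for every \<open>d \<le> k\<close>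
  dividing \<open>n = l - k + 1\<close>.\<close>

lemma cofactor_exponent_divisor:
  assumes d: "d \<ge> 1" and dn: "d dvd n" and dk: "d \<le> Suc K"
  shows "(if d dvd Suc K then 1 else 0) + (K div d - gexp n K d) = 1"
proof -
  have "gexp n K d \<in> (\<lambda>i. hexp n K i d) ` {0..K}" unfolding gexp_def by (intro Min_in) auto
  then obtain i where i: "i \<le> K" "gexp n K d = (K - i) div d + i div d"
    using hexp_divisor[OF dn] by auto
  show ?thesis
  proof (cases "d dvd Suc K")
    case True
    then show ?thesis using div_split_bounds(2)[OF d i(1)] i(2) gexp_le[of n K d] by simp
  next
    case False
    then have dK: "d \<le> K" using dk by (cases "d = Suc K") auto
    have "hexp n K (d - 1) d = (K - (d - 1)) div d"
      using hexp_divisor[OF dn] dK d by simp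
    also have "\<dots> = K div d - 1"
    proof -
      have "Suc K div d = K div d" using Suc_div_eq[OF d, of K] False by simp
      moreover have "Suc K = (K - (d - 1)) + d" using dK d by simp
      ultimately show ?thesis using d by (metis add_diff_cancel_right' div_add_self2 not_one_le_zero)
    qed
    finally have "hexp n K (d - 1) d = K div d - 1" .
    moreover have "gexp n K d \<le> hexp n K (d - 1) d" unfolding gexp_def using dK by (intro Min_le) auto
    moreover have "K div d \<ge> 1" using dK d by (simp add: div_greater_zero_iff Suc_le_eq)
    ultimately have "gexp n K d < K div d" by linarith
    then show ?thesis using div_split_bounds(1)[OF d i(1)] i(2) False by simp
  qed
qed

text \<open>The ideal equality in cyclotomic form, with \<open>k = K + 1\<close> and \<open>n = l - k + 1\<close>: \<open>{n}\<^sub>q\<close>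
  exceeds \<open>gtilde\<close> only at divisors \<open>d > k\<close> of \<open>n\<close>, the second generator only at indices
  \<open>d \<le> k\<close> not dividing \<open>n\<close>, and such indices are incomparable under divisibility.\<close>

lemma cyclotomic_form_ideal_eq:
  fixes n K L N :: nat
  defines "A \<equiv> \<lambda>d. if d dvd n then 1 else 0"
    and "G \<equiv> \<lambda>d. if d dvd n \<and> d \<le> Suc K then 1 else 0"
    and "B \<equiv> \<lambda>d. (if d dvd Suc K then 1 else 0) + (K div d - gexp n K d)"
  shows "laurent_ideal2_eq (cyc_prod L A) (monom 1 N * cyc_prod L B) (cyc_prod L G)"
proof (rule laurent_ideal2_eq_cyc_prod)
  have B_one: "B d = 1" if "d \<ge> 1" "d dvd n" "d \<le> Suc K" for d
    unfolding B_def using cofactor_exponent_divisor[OF that] by simp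
  have B_zero: "B d = 0" if "Suc K < d" for d
    unfolding B_def using that by (auto dest: dvd_imp_le)
  show "G d \<le> A d" for d unfolding G_def A_def by simp
  show "G d \<le> B d" if "d \<in> {1..L}" for d using that B_one unfolding G_def by auto
  fix d d' assume d': "d' \<in> {1..L}" and gaps: "G d < A d" "G d' < B d'"
  then have d: "d dvd n" "Suc K < d" unfolding G_def A_def by (auto split: if_splits)
  have "d' \<le> Suc K" using gaps(2) B_zero by (metis less_irrefl not_le not_less_zero)
  moreover have "\<not> d' dvd n" using gaps(2) B_one d' \<open>d' \<le> Suc K\<close> unfolding G_def by auto
  ultimately show "\<not> d dvd d' \<and> \<not> d' dvd d" using d d' dvd_trans by (auto dest: dvd_imp_le)
qed

theorem lemma4p4:
  fixes k l :: nat
  assumes "1 \<le> k" and "k \<le> l"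
  shows "laurent_dvd (glk l (k - 1)) (qfact (k - 1)) \<and>
    (\<forall>t N. glk l (k - 1) * t = monom 1 N * qfact (k - 1) \<longrightarrow>
        laurent_ideal2_eq (qb (l - k + 1)) (qb k * t) (gtilde l k))"
proof -
  define K n where "K = k - 1" and "n = l - k + 1"
  have l: "l = n + K" and k: "k = Suc K" using assms by (simp_all add: K_def n_def)
  have g: "glk l K = cyc_prod l (gexp n K)" unfolding l by (rule glk_cyc_prod)
  have fact: "qfact K = glk l K * cyc_prod l (\<lambda>d. K div d - gexp n K d)"
    unfolding g using qfact_cofactor[of K l] l by simp
  have "laurent_dvd (glk l K) (qfact K)"
    unfolding laurent_dvd_def using fact by (intro exI[of _ 0]) simp
  moreover have "laurent_ideal2_eq (qb n) (qb k * t) (gtilde l k)"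
    if t: "glk l K * t = monom 1 N * qfact K" for t N
  proof -
    have "t = monom 1 N * cyc_prod l (\<lambda>d. K div d - gexp n K d)"
      using t unfolding fact g by (simp add: cyc_prod_nonzero mult.left_commute)
    then have "qb k * t =
        monom 1 N * cyc_prod l (\<lambda>d. (if d dvd Suc K then 1 else 0) + (K div d - gexp n K d))"
      using qb_cyc_prod[of k l] assms k by (simp add: cyc_prod_mult mult.left_commute)
    moreover have "qb n = cyc_prod l (\<lambda>d. if d dvd n then 1 else 0)"
      using assms by (intro qb_cyc_prod) (auto simp: n_def)
    moreover have "gtilde l k = cyc_prod l (\<lambda>d. if d dvd n \<and> d \<le> Suc K then 1 else 0)"
      unfolding gtilde_def n_def[symmetric] using assms k by (intro cyc_prod_indicator) auto
    ultimately show ?thesis by (simp only: cyclotomic_form_ideal_eq)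
  qed
  ultimately show ?thesis unfolding K_def n_def by blast
qed

end
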